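(* Let $(\mathfrak{k},\partial)$ be a differential graded Lie algebra over a field of characteristic $0$, $\mathfrak{k}=\bigoplus_{i\le0}\mathfrak{k}^i$ with $\mathfrak{k}^i=0$ for $i\ll0$, and $\partial$ of degree $+1$. Assume there is a subspace $\mathfrak{l}$ of the center $\mathfrak{z}$ of $\mathfrak{k}$ such that $\partial$ vanishes on $\mathfrak{l}$ and the inclusion $\mathfrak{l}\hookrightarrow\mathfrak{k}$ induces an isomorphism in cohomology. Then: (1) for any even central element $X\in\mathfrak{z}$ with $\partial X=0$, the set of solutions $f\in\mathfrak{k}^-_{\mathrm{odd}}$ of $\partial f+\frac12[f,f]_{\mathfrak{k}}\equiv X\pmod{\mathfrak{l}}$ is a (nonempty) homogeneous space for the group $\exp(\mathfrak{k}^-_{\mathrm{even}})\times\mathfrak{l}^-_{\mathrm{odd}}$, where the first factor acts by gauge transformations and the second by translations; (2) the difference $\partial f+\frac12[f,f]_{\mathfrak{k}}-X\in\mathfrak{l}$ is independent of the solution $f$.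
   Context: $\mathfrak{k}^-=\bigoplus_{i<0}\mathfrak{k}^i$; "even/odd" refer to the parity of the degree $i$. $\mathfrak{k}^-_{\mathrm{even}}$ is an ordinary nilpotent Lie algebra; $\exp(\mathfrak{k}^-_{\mathrm{even}})$ denotes the corresponding group (the image of $s\mapsto\exp(s)=\sum_N s^N/N!$ in the degree completion of the enveloping algebra, with product given by the Campbell–Hausdorff formula). The gauge action on $\mathfrak{k}^-_{\mathrm{odd}}$ is $\exp(s).f=e^{\mathrm{ad}_s}f-j^R(\mathrm{ad}_s)\partial s$, where $j^R(z)=\frac{e^z-1}{z}$ and $\mathrm{ad}_s=[s,\cdot]_{\mathfrak{k}}$. Similarly $\mathfrak{l}^-_{\mathrm{odd}}=\mathfrak{l}\cap\mathfrak{k}^-_{\mathrm{odd}}$ (for the graded pieces), acting by translation $f\mapsto f+l$. *)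

theory Defs
  imports "HOL.Vector_Spaces"
begin

text \<open>A graded vector space over a field 'k is modelled as an ambient
 vector space 'v (with scalar multiplication scale) together with a family
 of subspaces K i (the homogeneous pieces k^i, i :: int).\<close>

definition gsign :: "int \<Rightarrow> 'k::field" where
  "gsign i = (if even i then 1 else -1)"

definition bounded_graded ::
  "('k::field \<Rightarrow> 'v::ab_group_add \<Rightarrow> 'v) \<Rightarrow> (int \<Rightarrow> 'v set) \<Rightarrow> nat \<Rightarrow> bool" where
  "bounded_graded scale K N \<longleftrightarrow>
     vector_space scale \<and>
     (\<forall>i. module.subspace scale (K i)) \<and>
     (\<forall>i. (i > 0 \<or> i < - int N) \<longrightarrow> K i = {0}) \<and>
     (\<forall>v. \<exists>!c. (\<forall>i. c i \<in> K i) \<and> v = (\<Sum>i\<in>{- int N..0}. c i))"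

definition dgla ::
  "('k::field \<Rightarrow> 'v::ab_group_add \<Rightarrow> 'v) \<Rightarrow> (int \<Rightarrow> 'v set) \<Rightarrow> nat
     \<Rightarrow> ('v \<Rightarrow> 'v \<Rightarrow> 'v) \<Rightarrow> ('v \<Rightarrow> 'v) \<Rightarrow> bool" where
  "dgla scale K N br d \<longleftrightarrow>
     bounded_graded scale K N \<and>
     (\<forall>x. Vector_Spaces.linear scale scale (br x)) \<and>
     (\<forall>y. Vector_Spaces.linear scale scale (\<lambda>x. br x y)) \<and>
     (\<forall>i j x y. x \<in> K i \<longrightarrow> y \<in> K j \<longrightarrow> br x y \<in> K (i + j)) \<and>
     (\<forall>i j x y. x \<in> K i \<longrightarrow> y \<in> K j \<longrightarrow>
        br x y = - scale (gsign (i * j)) (br y x)) \<and>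
     (\<forall>i j x y z. x \<in> K i \<longrightarrow> y \<in> K j \<longrightarrow>
        br x (br y z) = br (br x y) z + scale (gsign (i * j)) (br y (br x z))) \<and>
     Vector_Spaces.linear scale scale d \<and>
     (\<forall>i x. x \<in> K i \<longrightarrow> d x \<in> K (i + 1)) \<and>
     (\<forall>x. d (d x) = 0) \<and>
     (\<forall>i x y. x \<in> K i \<longrightarrow> d (br x y) = br (d x) y + scale (gsign i) (br x (d y)))"

definition graded_part ::
  "('k::field \<Rightarrow> 'v::ab_group_add \<Rightarrow> 'v) \<Rightarrow> (int \<Rightarrow> 'v set) \<Rightarrow> (int \<Rightarrow> bool) \<Rightarrow> 'v set" where
  "graded_part scale K P = module.span scale (\<Union>i\<in>{i. P i}. K i)"

definition center :: "('v::zero \<Rightarrow> 'v \<Rightarrow> 'v) \<Rightarrow> 'v set" where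
  "center br = {x. \<forall>y. br x y = 0}"

text \<open>A subspace L with zero differential which is graded (the span of its
 graded pieces L \<inter> K i), and such that the inclusion into (k, d) induces an
 isomorphism on cohomology in every degree: since the differential of L is
 zero, H^i(L) = L \<inter> K i, and H^i(k) = (ker d \<inter> K i) / d(K (i-1)).\<close>

definition quasi_iso_incl ::
  "('k::field \<Rightarrow> 'v::ab_group_add \<Rightarrow> 'v) \<Rightarrow> (int \<Rightarrow> 'v set) \<Rightarrow> ('v \<Rightarrow> 'v) \<Rightarrow> 'v set \<Rightarrow> bool" where
  "quasi_iso_incl scale K d L \<longleftrightarrow>
     (\<forall>i x. x \<in> L \<inter> K i \<longrightarrow> x \<in> d ` K (i - 1) \<longrightarrow> x = 0) \<and>
     (\<forall>i y. y \<in> K i \<longrightarrow> d y = 0 \<longrightarrow> (\<exists>x \<in> L \<inter> K i. y - x \<in> d ` K (i - 1)))"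

text \<open>Gauge action exp(s).f = e^{ad_s} f - j^R(ad_s)(d s), j^R(z) = (e^z - 1)/z,
 with the power series truncated at M; for s in k^-_even and M > N all
 omitted terms vanish (ad_s lowers degree by at least 2).\<close>

definition gauge_act ::
  "('k::field_char_0 \<Rightarrow> 'v::ab_group_add \<Rightarrow> 'v) \<Rightarrow> ('v \<Rightarrow> 'v \<Rightarrow> 'v) \<Rightarrow> ('v \<Rightarrow> 'v)
     \<Rightarrow> nat \<Rightarrow> 'v \<Rightarrow> 'v \<Rightarrow> 'v" where
  "gauge_act scale br d M s f =
     (\<Sum>n<M. scale (1 / of_nat (fact n)) ((br s ^^ n) f))
     - (\<Sum>n<M. scale (1 / of_nat (fact (Suc n))) ((br s ^^ n) (d s)))"

end

theory Submission
  imports Defs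
begin

text \<open>Solutions are constructed and compared degree by degree, from degree \<open>0\<close>
  downwards, two degrees at a time.  For existence, the highest component of
  \<open>curv f - X\<close> not yet known to lie in \<open>L\<close> is closed by the Bianchi identity; as
  \<open>L \<rightarrow> k\<close> is a quasi-isomorphism it is an element of \<open>L\<close> plus an exact term \<open>d y\<close>,
  and replacing \<open>f\<close> by \<open>f - y\<close> pushes the defect two degrees down.  For transitivity,
  if \<open>g\<close> agrees with \<open>exp(s).f + l\<close> above degree \<open>a\<close>, the top component \<open>D\<close> of the
  difference has \<open>d D \<in> L\<close> because both curvatures are congruent to \<open>X\<close> modulo \<open>L\<close>;
  writing \<open>D = x + d y\<close> and replacing \<open>s\<close> by \<open>s - y\<close>, \<open>l\<close> by \<open>l + x\<close> improves the
  agreement, because \<open>exp(s + t).f = exp(s).f - d t\<close> up to terms of lower degree.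
  The orbit consists of solutions with the same curvature since \<open>[s, curv f] = 0\<close>
  for a solution \<open>f\<close>, and the degree-\<open>n\<close> part \<open>G\<^sub>n\<close> (in \<open>s\<close>) of the curvature of
  \<open>exp(s).f\<close> satisfies \<open>(n + 1) G\<^sub>n\<^sub>+\<^sub>1 = [s, G\<^sub>n]\<close>.  Boundedness of the
  grading makes every process finite.\<close>

lemma gsign_even [simp]: "even i \<Longrightarrow> gsign i = 1"
  by (simp add: gsign_def)

lemma gsign_odd [simp]: "odd i \<Longrightarrow> gsign i = -1"
  by (simp add: gsign_def)

lemma sum_atMost_rev: "(\<Sum>a\<le>(n::nat). g (n - a)) = (\<Sum>a\<le>n. g a)"
  by (rule sum.reindex_bij_witness[where i="\<lambda>a. n - a" and j="\<lambda>a. n - a"]) auto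

lemma descending_even_induction:
  fixes Q :: "'a \<Rightarrow> int \<Rightarrow> bool"
  assumes "x0 \<in> A" "Q x0 0"
    and step: "\<And>x a. x \<in> A \<Longrightarrow> a \<le> 0 \<Longrightarrow> even a \<Longrightarrow> Q x a \<Longrightarrow> \<exists>y\<in>A. Q y (a - 2)"
  shows "\<exists>x\<in>A. Q x (- 2 * int m)"
proof (induction m)
  case 0
  show ?case using assms(1,2) by auto
next
  case (Suc m)
  then obtain x where "x \<in> A" "Q x (- 2 * int m)" by blast
  moreover have "- 2 * int m \<le> 0" "even (- 2 * int m)" by simp_all
  ultimately obtain y where "y \<in> A" "Q y (- 2 * int m - 2)" using step by blast
  moreover have "- 2 * int m - 2 = - 2 * int (Suc m)" by simp
  ultimately show ?case by metis
qed

locale bounded_dgla = vector_space scale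
  for scale :: "'k::field_char_0 \<Rightarrow> 'v::ab_group_add \<Rightarrow> 'v" +
  fixes K :: "int \<Rightarrow> 'v set" and N :: nat
    and br :: "'v \<Rightarrow> 'v \<Rightarrow> 'v" and d :: "'v \<Rightarrow> 'v"
  assumes subspace_K: "subspace (K i)"
    and K_outside: "i > 0 \<or> i < - int N \<Longrightarrow> K i = {0}"
    and graded_decomposition: "\<exists>!c. (\<forall>i. c i \<in> K i) \<and> v = (\<Sum>i\<in>{- int N..0}. c i)"
    and linear_br_right: "Vector_Spaces.linear scale scale (br x)"
    and linear_br_left: "Vector_Spaces.linear scale scale (\<lambda>x. br x y)"
    and br_K: "\<And>i j x y. x \<in> K i \<Longrightarrow> y \<in> K j \<Longrightarrow> br x y \<in> K (i + j)"
    and br_antisym: "\<And>i j x y. x \<in> K i \<Longrightarrow> y \<in> K j \<Longrightarrow>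
      br x y = - scale (gsign (i * j)) (br y x)"
    and br_jacobi: "\<And>i j x y z. x \<in> K i \<Longrightarrow> y \<in> K j \<Longrightarrow>
      br x (br y z) = br (br x y) z + scale (gsign (i * j)) (br y (br x z))"
    and linear_d: "Vector_Spaces.linear scale scale d"
    and d_K: "\<And>i x. x \<in> K i \<Longrightarrow> d x \<in> K (i + 1)"
    and d_d [simp]: "d (d x) = 0"
    and d_br: "\<And>i x y. x \<in> K i \<Longrightarrow>
      d (br x y) = br (d x) y + scale (gsign i) (br x (d y))"

lemma dgla_imp_bounded_dgla: "dgla scale K N br d \<Longrightarrow> bounded_dgla scale K N br d"
  unfolding dgla_def bounded_graded_def bounded_dgla_def bounded_dgla_axioms_def
  by (elim conjE) (intro conjI; assumption)

context bounded_dgla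
begin

lemma br_add_right: "br x (y + z) = br x y + br x z"
  and br_scale_right: "br x (scale c y) = scale c (br x y)"
  using linear_br_right[of x] by (simp_all add: linear_iff)

lemma br_add_left: "br (x + y) z = br x z + br y z"
  and br_scale_left: "br (scale c x) y = scale c (br x y)"
  using linear_br_left[of z] linear_br_left[of y] by (simp_all add: linear_iff)

lemma br_zero_right [simp]: "br x 0 = 0"
  and br_diff_right: "br x (y - z) = br x y - br x z"
  and br_sum_right: "br x (sum g A) = (\<Sum>a\<in>A. br x (g a))"
  using linear.axioms(3)[OF linear_br_right[of x]]
  by (fact module_hom.zero module_hom.diff module_hom.sum)+

lemma br_zero_left [simp]: "br 0 y = 0"
  and br_diff_left: "br (x - z) y = br x y - br z y"
  and br_sum_left: "br (sum g A) y = (\<Sum>a\<in>A. br (g a) y)"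
  using linear.axioms(3)[OF linear_br_left[of y]]
  by (fact module_hom.zero[simplified] module_hom.diff module_hom.sum)+

lemma d_add: "d (x + y) = d x + d y"
  and d_scale: "d (scale c x) = scale c (d x)"
  using linear_d by (simp_all add: linear_iff)

lemma d_zero [simp]: "d 0 = 0"
  and d_diff: "d (x - y) = d x - d y"
  and d_neg: "d (- x) = - d x"
  and d_sum: "d (sum g A) = (\<Sum>a\<in>A. d (g a))"
  using linear.axioms(3)[OF linear_d]
  by (fact module_hom.zero module_hom.diff module_hom.neg module_hom.sum)+

lemma scale_half_double: "scale (1/2) (x + x) = x"
proof -
  have "scale (1/2) (x + x) = scale (1/2) (scale 2 x)"
    by (metis one_add_one scale_left_distrib scale_one)
  also have "\<dots> = x" by simp
  finally show ?thesis .
qed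

section \<open>Homogeneous components and graded parts\<close>

abbreviation degs :: "int set" where
  "degs \<equiv> {- int N..0}"

definition hcomp :: "int \<Rightarrow> 'v \<Rightarrow> 'v" where
  "hcomp i v = (THE c. (\<forall>i. c i \<in> K i) \<and> v = (\<Sum>i\<in>degs. c i)) i"

lemma hcomp_K: "hcomp i v \<in> K i"
  and sum_hcomp: "(\<Sum>i\<in>degs. hcomp i v) = v"
proof -
  have "(\<forall>i. hcomp i v \<in> K i) \<and> v = (\<Sum>i\<in>degs. hcomp i v)"
    unfolding hcomp_def by (rule theI'[OF graded_decomposition])
  then show "hcomp i v \<in> K i" "(\<Sum>i\<in>degs. hcomp i v) = v" by simp_all
qed

lemma hcomp_unique:
  assumes "\<forall>i. c i \<in> K i" "v = (\<Sum>i\<in>degs. c i)"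
  shows "hcomp i v = c i"
proof -
  have "(THE c. (\<forall>i. c i \<in> K i) \<and> v = (\<Sum>i\<in>degs. c i)) = c"
    by (rule the1_equality[OF graded_decomposition]) (use assms in blast)
  then show ?thesis by (simp add: hcomp_def)
qed

lemma zero_K: "0 \<in> K i"
  using subspace_K subspace_0 by blast

lemma K_outside_zero: "i \<notin> degs \<Longrightarrow> x \<in> K i \<Longrightarrow> x = 0"
  using K_outside[of i] by auto

lemma hcomp_outside: "i \<notin> degs \<Longrightarrow> hcomp i v = 0"
  using K_outside_zero hcomp_K by blast

lemma hcomp_zero [simp]: "hcomp i 0 = 0"
  using hcomp_unique[of "\<lambda>_. 0"] zero_K by simp

lemma hcomp_K_eq:
  assumes "x \<in> K j"
  shows "hcomp i x = (if i = j then x else 0)"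
proof (cases "j \<in> degs")
  case True
  then show ?thesis
    using hcomp_unique[of "\<lambda>i. if i = j then x else 0"] assms zero_K by simp
next
  case False
  then have "x = 0" using K_outside_zero assms by blast
  then show ?thesis by simp
qed

lemma hcomp_add: "hcomp i (x + y) = hcomp i x + hcomp i y"
  by (rule hcomp_unique)
    (auto simp: hcomp_K subspace_K subspace_add sum.distrib sum_hcomp)

lemma hcomp_scale: "hcomp i (scale c x) = scale c (hcomp i x)"
  by (rule hcomp_unique)
    (auto simp: hcomp_K subspace_K subspace_scale scale_sum_right[symmetric] sum_hcomp)

lemma linear_hcomp: "Vector_Spaces.linear scale scale (hcomp i)"
  by (simp add: linear_iff vector_space_axioms hcomp_add hcomp_scale)

lemma hcomp_diff: "hcomp i (x - y) = hcomp i x - hcomp i y"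
  using module_hom.diff[OF linear.axioms(3)[OF linear_hcomp]] .

lemma hcomp_sum: "hcomp i (sum g A) = (\<Sum>a\<in>A. hcomp i (g a))"
  using module_hom.sum[OF linear.axioms(3)[OF linear_hcomp]] .

lemma hcomp_d: "hcomp (i + 1) (d v) = d (hcomp i v)"
proof -
  have "hcomp (i + 1) (d v) = (\<Sum>j\<in>degs. hcomp (i + 1) (d (hcomp j v)))"
    by (simp only: d_sum[symmetric] hcomp_sum[symmetric] sum_hcomp)
  also have "\<dots> = (\<Sum>j\<in>degs. if j = i then d (hcomp i v) else 0)"
    by (rule sum.cong) (auto simp: hcomp_K_eq[OF d_K[OF hcomp_K]])
  also have "\<dots> = d (hcomp i v)"
    by (cases "i \<in> degs") (auto simp: hcomp_outside)
  finally show ?thesis .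
qed

lemma br_hcomp_expand: "br x y = (\<Sum>i\<in>degs. \<Sum>j\<in>degs. br (hcomp i x) (hcomp j y))"
proof -
  have "br x y = br (\<Sum>i\<in>degs. hcomp i x) (\<Sum>j\<in>degs. hcomp j y)"
    by (simp only: sum_hcomp)
  then show ?thesis by (simp only: br_sum_left) (simp only: br_sum_right)
qed

abbreviation gp :: "(int \<Rightarrow> bool) \<Rightarrow> 'v set" where
  "gp \<equiv> graded_part scale K"

lemma subspace_gp: "subspace (gp P)"
  unfolding graded_part_def by (rule subspace_span)

lemma K_gp: "P i \<Longrightarrow> x \<in> K i \<Longrightarrow> x \<in> gp P"
  unfolding graded_part_def by (auto intro: span_base)

lemma mem_gp_iff: "v \<in> gp P \<longleftrightarrow> (\<forall>i. \<not> P i \<longrightarrow> hcomp i v = 0)"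
proof
  have "subspace {v. \<forall>i. \<not> P i \<longrightarrow> hcomp i v = 0}"
    by (rule subspaceI) (auto simp: hcomp_add hcomp_scale)
  then have "gp P \<subseteq> {v. \<forall>i. \<not> P i \<longrightarrow> hcomp i v = 0}"
    unfolding graded_part_def by (rule span_minimal[rotated]) (auto simp: hcomp_K_eq)
  then show "v \<in> gp P \<Longrightarrow> \<forall>i. \<not> P i \<longrightarrow> hcomp i v = 0" by blast
next
  assume "\<forall>i. \<not> P i \<longrightarrow> hcomp i v = 0"
  then have "hcomp i v \<in> gp P" for i
    using K_gp[OF _ hcomp_K] subspace_0[OF subspace_gp] by (cases "P i") auto
  then have "(\<Sum>i\<in>degs. hcomp i v) \<in> gp P"
    by (intro subspace_sum[OF subspace_gp])
  then show "v \<in> gp P" by (simp only: sum_hcomp)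
qed

lemma gp_hcomp_zero: "v \<in> gp P \<Longrightarrow> \<not> P i \<Longrightarrow> hcomp i v = 0"
  by (simp add: mem_gp_iff)

lemma gp_mono: "(\<And>i. P i \<Longrightarrow> Q i) \<Longrightarrow> v \<in> gp P \<Longrightarrow> v \<in> gp Q"
  by (auto simp: mem_gp_iff)

lemma br_gp:
  assumes "\<And>i j. P i \<Longrightarrow> Q j \<Longrightarrow> T (i + j)" "x \<in> gp P" "y \<in> gp Q"
  shows "br x y \<in> gp T"
proof -
  have "br (hcomp i x) (hcomp j y) \<in> gp T" for i j
  proof (cases "P i \<and> Q j")
    case True
    then have "T (i + j)" using assms(1) by blast
    then show ?thesis by (rule K_gp[OF _ br_K[OF hcomp_K hcomp_K]])
  next
    case False
    then have "hcomp i x = 0 \<or> hcomp j y = 0" using assms(2,3) gp_hcomp_zero by blast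
    then show ?thesis using subspace_0[OF subspace_gp] by (elim disjE) simp_all
  qed
  then show ?thesis
    by (simp only: br_hcomp_expand[of x y] subspace_sum[OF subspace_gp])
qed

lemma d_gp:
  assumes "\<And>i. P i \<Longrightarrow> Q (i + 1)" "x \<in> gp P"
  shows "d x \<in> gp Q"
proof -
  have "d (hcomp i x) \<in> gp Q" for i
  proof (cases "P i")
    case True
    then have "Q (i + 1)" using assms(1) by blast
    then show ?thesis by (rule K_gp[OF _ d_K[OF hcomp_K]])
  next
    case False
    then have "hcomp i x = 0" using assms(2) gp_hcomp_zero by blast
    then show ?thesis using subspace_0[OF subspace_gp] by simp
  qed
  then have "(\<Sum>i\<in>degs. d (hcomp i x)) \<in> gp Q"
    by (simp only: subspace_sum[OF subspace_gp])
  then show ?thesis by (simp only: d_sum[symmetric] sum_hcomp)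
qed

section \<open>Sign rules for even and odd elements\<close>

lemma br_even_antisym:
  assumes "x \<in> gp even"
  shows "br y x = - br x y"
proof -
  have "br (hcomp j y) (hcomp i x) = - br (hcomp i x) (hcomp j y)" for i j
    using br_antisym[OF hcomp_K hcomp_K, of j y i x] gp_hcomp_zero[OF assms, of i]
    by (cases "even i") simp_all
  then have "br y x = (\<Sum>j\<in>degs. \<Sum>i\<in>degs. - br (hcomp i x) (hcomp j y))"
    by (simp only: br_hcomp_expand[of y x])
  also have "\<dots> = - br x y"
    by (subst sum.swap) (simp add: sum_negf br_hcomp_expand[of x y])
  finally show ?thesis .
qed

lemma br_odd_sym:
  assumes "x \<in> gp odd" "y \<in> gp odd"
  shows "br x y = br y x"
proof -
  have "br (hcomp i x) (hcomp j y) = br (hcomp j y) (hcomp i x)" for i j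
    using br_antisym[OF hcomp_K hcomp_K, of i x j y] gp_hcomp_zero[OF assms(1), of i]
      gp_hcomp_zero[OF assms(2), of j]
    by (cases "odd i \<and> odd j") auto
  then have "br x y = (\<Sum>i\<in>degs. \<Sum>j\<in>degs. br (hcomp j y) (hcomp i x))"
    by (simp only: br_hcomp_expand[of x y])
  also have "\<dots> = br y x"
    by (subst sum.swap) (simp only: br_hcomp_expand[of y x])
  finally show ?thesis .
qed

lemma jacobi_gp:
  assumes "x \<in> gp P" "y \<in> gp Q" "\<And>i j. P i \<Longrightarrow> Q j \<Longrightarrow> gsign (i * j) = c"
  shows "br x (br y z) = br (br x y) z + scale c (br y (br x z))"
proof -
  have hom: "br (hcomp i x) (br (hcomp j y) z)
      = br (br (hcomp i x) (hcomp j y)) z + scale c (br (hcomp j y) (br (hcomp i x) z))" for i j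
  proof (cases "P i \<and> Q j")
    case True
    then show ?thesis using br_jacobi[OF hcomp_K hcomp_K, of i x j y z] assms(3) by simp
  next
    case False
    then have "hcomp i x = 0 \<or> hcomp j y = 0" using assms(1,2) gp_hcomp_zero by blast
    then show ?thesis by (elim disjE) simp_all
  qed
  have "br x (br y z) = (\<Sum>i\<in>degs. \<Sum>j\<in>degs. br (hcomp i x) (br (hcomp j y) z))"
    by (simp only: br_sum_right[symmetric] br_sum_left[symmetric] sum_hcomp)
  also have "\<dots> = (\<Sum>i\<in>degs. \<Sum>j\<in>degs. br (br (hcomp i x) (hcomp j y)) z)
      + scale c (\<Sum>j\<in>degs. \<Sum>i\<in>degs. br (hcomp j y) (br (hcomp i x) z))"
    by (simp only: hom) (subst (2) sum.swap, simp add: sum.distrib scale_sum_right)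
  also have "\<dots> = br (br x y) z + scale c (br y (br x z))"
    by (simp only: br_sum_right[symmetric] br_sum_left[symmetric] sum_hcomp)
  finally show ?thesis .
qed

lemma jacobi_even: "s \<in> gp even \<Longrightarrow> br s (br x z) = br (br s x) z + br x (br s z)"
  using jacobi_gp[of s even x "\<lambda>_. True" 1 z] by (simp add: mem_gp_iff)

lemma jacobi_odd: "x \<in> gp odd \<Longrightarrow> y \<in> gp odd \<Longrightarrow> br x (br y z) = br (br x y) z - br y (br x z)"
  using jacobi_gp[of x odd y odd "-1" z] by simp

lemma d_br_gp:
  assumes "x \<in> gp P" "\<And>i. P i \<Longrightarrow> gsign i = c"
  shows "d (br x y) = br (d x) y + scale c (br x (d y))"
proof -
  have hom: "d (br (hcomp i x) y) = br (d (hcomp i x)) y + scale c (br (hcomp i x) (d y))" for i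
  proof (cases "P i")
    case True
    then show ?thesis using d_br[OF hcomp_K, of i x y] assms(2) by simp
  next
    case False
    then have "hcomp i x = 0" using assms(1) gp_hcomp_zero by blast
    then show ?thesis by simp
  qed
  have "d (br x y) = (\<Sum>i\<in>degs. d (br (hcomp i x) y))"
    by (simp only: d_sum[symmetric] br_sum_left[symmetric] sum_hcomp)
  also have "\<dots> = br (d x) y + scale c (br x (d y))"
    by (simp only: hom sum.distrib scale_sum_right[symmetric] d_sum[symmetric]
        br_sum_left[symmetric] sum_hcomp)
  finally show ?thesis .
qed

lemma d_br_even: "s \<in> gp even \<Longrightarrow> d (br s y) = br (d s) y + br s (d y)"
  using d_br_gp[of s even 1 y] by simp

lemma d_br_odd: "x \<in> gp odd \<Longrightarrow> d (br x y) = br (d x) y - br x (d y)"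
  using d_br_gp[of x odd "-1" y] by simp

lemma br_odd_self_self:
  assumes x: "x \<in> gp odd"
  shows "br x (br x x) = 0"
proof -
  define w where "w = br x (br x x)"
  define B where "B = br (br x x) x"
  have "br x x \<in> gp even" by (rule br_gp[OF _ x x]) auto
  then have "w = - B"
    unfolding w_def B_def by (rule br_even_antisym)
  then have wB: "w + B = 0"
    by (simp add: eq_neg_iff_add_eq_0)
  have "w = B - w"
    unfolding w_def B_def by (rule jacobi_odd[OF x x])
  then have "w + w = B"
    by (simp add: eq_diff_eq)
  with wB have "w + w + w = 0"
    by (metis add.commute)
  moreover have "scale (1 + 1 + 1) w = w + w + w"
    by (simp only: scale_left_distrib scale_one)
  ultimately have "scale 3 w = 0" by simp
  then have "scale (1/3) (scale 3 w) = 0" by simp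
  then show ?thesis by (simp add: w_def)
qed

section \<open>The degree filtration\<close>

abbreviation fil :: "int \<Rightarrow> 'v set" where
  "fil m \<equiv> gp (\<lambda>j. j \<le> m)"

abbreviation k_odd :: "'v set" where
  "k_odd \<equiv> gp (\<lambda>i. i < 0 \<and> odd i)"

abbreviation k_even :: "'v set" where
  "k_even \<equiv> gp (\<lambda>i. i < 0 \<and> even i)"

lemma fil_mono: "a \<le> b \<Longrightarrow> x \<in> fil a \<Longrightarrow> x \<in> fil b"
  by (rule gp_mono) auto

lemma K_fil: "x \<in> K i \<Longrightarrow> i \<le> m \<Longrightarrow> x \<in> fil m"
  by (rule K_gp)

lemma br_fil: "x \<in> fil a \<Longrightarrow> y \<in> fil b \<Longrightarrow> br x y \<in> fil (a + b)"
  by (rule br_gp) auto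

lemma d_fil: "x \<in> fil a \<Longrightarrow> d x \<in> fil (a + 1)"
  by (rule d_gp) auto

lemma fil_top: "x \<in> fil 0"
  by (auto simp: mem_gp_iff hcomp_outside)

lemma fil_bottom:
  assumes "x \<in> fil m" "m < - int N"
  shows "x = 0"
proof -
  have "hcomp i x = 0" if "i \<in> degs" for i
    using that assms gp_hcomp_zero by simp
  then show ?thesis using sum_hcomp[of x] by simp
qed

lemma fil_diff_hcomp: "x \<in> fil m \<Longrightarrow> x - hcomp m x \<in> fil (m - 1)"
  by (auto simp: mem_gp_iff hcomp_diff hcomp_K_eq[OF hcomp_K])

lemma k_even_fil: "s \<in> k_even \<Longrightarrow> s \<in> fil (-2)"
  by (rule gp_mono) (auto elim: evenE)

lemma k_odd_fil: "x \<in> k_odd \<Longrightarrow> x \<in> fil (-1)"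
  by (rule gp_mono) auto

lemma k_even_even: "s \<in> k_even \<Longrightarrow> s \<in> gp even"
  and k_odd_odd: "x \<in> k_odd \<Longrightarrow> x \<in> gp odd"
  by (rule gp_mono; auto)+

lemma br_k_even_k_odd: "s \<in> k_even \<Longrightarrow> x \<in> k_odd \<Longrightarrow> br s x \<in> k_odd"
  by (rule br_gp) auto

lemma d_k_even: "s \<in> k_even \<Longrightarrow> d s \<in> k_odd"
  by (rule d_gp) auto

lemma ad_power_k_odd: "s \<in> k_even \<Longrightarrow> x \<in> k_odd \<Longrightarrow> (br s ^^ n) x \<in> k_odd"
  by (induction n) (auto intro: br_k_even_k_odd)

lemma ad_power_fil:
  assumes "s \<in> fil (-2)" "x \<in> fil b"
  shows "(br s ^^ n) x \<in> fil (b - 2 * int n)"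
proof (induction n)
  case 0
  then show ?case using assms(2) by simp
next
  case (Suc n)
  have "br s ((br s ^^ n) x) \<in> fil (-2 + (b - 2 * int n))"
    by (rule br_fil[OF assms(1) Suc])
  then show ?case by (simp add: algebra_simps)
qed

lemma ad_power_fil_mono:
  assumes "s \<in> fil (-2)" "x \<in> fil b"
  shows "(br s ^^ n) x \<in> fil b"
  using ad_power_fil[OF assms, of n] by (rule fil_mono[rotated]) simp

lemma ad_power_nilpotent:
  assumes "s \<in> fil (-2)" "Suc N \<le> n"
  shows "(br s ^^ n) x = 0"
  using fil_bottom[OF ad_power_fil[OF assms(1) fil_top]] assms(2) by simp

section \<open>Curvature and the gauge action\<close>

definition curv :: "'v \<Rightarrow> 'v" where
  "curv x = d x + scale (1/2) (br x x)"

lemma curv_even: "x \<in> k_odd \<Longrightarrow> curv x \<in> gp even"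
  unfolding curv_def
  by (intro subspace_add[OF subspace_gp] subspace_scale[OF subspace_gp]
      d_gp[of "\<lambda>i. i < 0 \<and> odd i"] br_gp[of "\<lambda>i. i < 0 \<and> odd i" "\<lambda>i. i < 0 \<and> odd i"]) auto

lemma bianchi_identity:
  assumes x: "x \<in> gp odd"
  shows "d (curv x) = br (curv x) x"
proof -
  have dx: "d x \<in> gp even" by (rule d_gp[OF _ x]) auto
  have xx: "br x x \<in> gp even" by (rule br_gp[OF _ x x]) auto
  have "d (curv x) = scale (1/2) (br (d x) x - br x (d x))"
    by (simp add: curv_def d_add d_scale d_br_odd[OF x])
  also have "\<dots> = br (d x) x"
    by (simp add: br_even_antisym[OF dx] scale_half_double)
  also have "\<dots> = br (curv x) x"
    using br_even_antisym[OF xx, of x] br_odd_self_self[OF x]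
    by (simp add: curv_def br_add_left br_scale_left)
  finally show ?thesis .
qed

lemma curv_add: "curv (x + e) = curv x + d e + scale (1/2) (br x e + br e x + br e e)"
  by (simp add: curv_def d_add br_add_left br_add_right scale_right_distrib algebra_simps)

lemma curv_add_fil:
  assumes "x \<in> fil (-1)" "e \<in> fil b" "b \<le> -1"
  shows "curv (x + e) - curv x - d e \<in> fil (b - 1)"
proof -
  have "br x e \<in> fil (b - 1)" "br e x \<in> fil (b - 1)"
    using br_fil[OF assms(1,2)] br_fil[OF assms(2,1)] by (simp_all add: algebra_simps)
  moreover have "br e e \<in> fil (b - 1)"
    by (rule fil_mono[OF _ br_fil[OF assms(2,2)]]) (use assms(3) in simp)
  ultimately show ?thesis
    by (simp add: curv_add subspace_add[OF subspace_gp] subspace_scale[OF subspace_gp])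
qed

text \<open>\<open>gauge_term s f n\<close> and \<open>curv_term s f n\<close> are the parts of \<open>exp(s).f\<close> and of
  its curvature that are homogeneous of degree \<open>n\<close> in \<open>s\<close>.\<close>

definition gauge_term :: "'v \<Rightarrow> 'v \<Rightarrow> nat \<Rightarrow> 'v" where
  "gauge_term s f n = scale (1 / of_nat (fact n)) ((br s ^^ n) f)
     - (case n of 0 \<Rightarrow> 0 | Suc k \<Rightarrow> scale (1 / of_nat (fact n)) ((br s ^^ k) (d s)))"

definition curv_term :: "'v \<Rightarrow> 'v \<Rightarrow> nat \<Rightarrow> 'v" where
  "curv_term s f n = d (gauge_term s f n)
     + scale (1/2) (\<Sum>a\<le>n. br (gauge_term s f a) (gauge_term s f (n - a)))"

lemma gauge_term_0 [simp]: "gauge_term s f 0 = f"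
  by (simp add: gauge_term_def)

lemma gauge_term_Suc:
  "scale (of_nat (Suc n)) (gauge_term s f (Suc n)) = br s (gauge_term s f n) - (if n = 0 then d s else 0)"
proof -
  have "(of_nat (fact (Suc n)) :: 'k) = of_nat (Suc n) * of_nat (fact n)"
    by (simp only: fact_Suc of_nat_mult of_nat_id)
  then have coeff: "(of_nat (Suc n) :: 'k) * (1 / of_nat (fact (Suc n))) = 1 / of_nat (fact n)"
    by (simp del: of_nat_Suc)
  have "scale (of_nat (Suc n)) (gauge_term s f (Suc n)) =
      scale (1 / of_nat (fact n)) (br s ((br s ^^ n) f)) - scale (1 / of_nat (fact n)) ((br s ^^ n) (d s))"
    by (simp only: gauge_term_def scale_right_diff_distrib scale_scale coeff nat.case funpow.simps o_apply)
  also have "\<dots> = br s (gauge_term s f n) - (if n = 0 then d s else 0)"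
    by (cases n) (simp_all add: gauge_term_def br_scale_right br_diff_right)
  finally show ?thesis .
qed

lemma gauge_term_k_odd: "s \<in> k_even \<Longrightarrow> f \<in> k_odd \<Longrightarrow> gauge_term s f n \<in> k_odd"
  unfolding gauge_term_def
  by (cases n) (auto intro!: subspace_diff[OF subspace_gp] subspace_scale[OF subspace_gp]
      ad_power_k_odd d_k_even br_k_even_k_odd subspace_0[OF subspace_gp])

lemma gauge_term_vanish:
  assumes "s \<in> fil (-2)" "Suc N < n"
  shows "gauge_term s f n = 0"
proof -
  obtain k where "n = Suc k" "Suc N \<le> k" using assms(2) by (cases n) auto
  then show ?thesis by (simp add: gauge_term_def ad_power_nilpotent[OF assms(1)])
qed

abbreviation gauge :: "'v \<Rightarrow> 'v \<Rightarrow> 'v" where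
  "gauge \<equiv> gauge_act scale br d (Suc N)"

lemma gauge_eq_sum_terms:
  assumes s: "s \<in> fil (-2)"
  shows "gauge s f = (\<Sum>n\<le>Suc N. gauge_term s f n)"
proof -
  have "(\<Sum>n\<le>Suc N. gauge_term s f n)
      = (\<Sum>n\<le>Suc N. scale (1 / of_nat (fact n)) ((br s ^^ n) f))
        - (\<Sum>n\<le>Suc N. (case n of 0 \<Rightarrow> 0 | Suc k \<Rightarrow> scale (1 / of_nat (fact n)) ((br s ^^ k) (d s))))"
    by (simp add: gauge_term_def sum_subtractf)
  also have "(\<Sum>n\<le>Suc N. scale (1 / of_nat (fact n)) ((br s ^^ n) f))
      = (\<Sum>n<Suc N. scale (1 / of_nat (fact n)) ((br s ^^ n) f))"
    using ad_power_nilpotent[OF s, of "Suc N" f] by (simp add: lessThan_Suc_atMost[symmetric])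
  also have "(\<Sum>n\<le>Suc N. (case n of 0 \<Rightarrow> 0 | Suc k \<Rightarrow> scale (1 / of_nat (fact n)) ((br s ^^ k) (d s))))
      = (\<Sum>n<Suc N. scale (1 / of_nat (fact (Suc n))) ((br s ^^ n) (d s)))"
    by (subst sum.atMost_shift) simp
  finally show ?thesis by (simp add: gauge_act_def)
qed

lemma gauge_k_odd:
  assumes "s \<in> k_even" "f \<in> k_odd"
  shows "gauge s f \<in> k_odd"
  unfolding gauge_eq_sum_terms[OF k_even_fil[OF assms(1)]]
  by (rule subspace_sum[OF subspace_gp gauge_term_k_odd[OF assms]])

lemma br_sum_square:
  fixes h :: "nat \<Rightarrow> 'v"
  assumes "\<And>k. M < k \<Longrightarrow> h k = 0"
  shows "br (\<Sum>a\<le>M. h a) (\<Sum>b\<le>M. h b) = (\<Sum>k\<le>2*M. \<Sum>a\<le>k. br (h a) (h (k - a)))"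
proof -
  have "br (\<Sum>a\<le>M. h a) (\<Sum>b\<le>M. h b) = (\<Sum>a\<le>M. \<Sum>b\<le>M. br (h a) (h b))"
    by (simp only: br_sum_left) (simp only: br_sum_right)
  also have "\<dots> = (\<Sum>(a,b)\<in>{..M} \<times> {..M}. br (h a) (h b))"
    by (rule sum.cartesian_product)
  also have "\<dots> = (\<Sum>(a,b)\<in>{(i, j). i + j \<le> 2 * M}. br (h a) (h b))"
  proof (rule sum.mono_neutral_left)
    show "finite {(i, j). i + j \<le> 2 * M}"
      by (rule finite_subset[of _ "{..2*M} \<times> {..2*M}"]) auto
    show "\<forall>p\<in>{(i, j). i + j \<le> 2 * M} - {..M} \<times> {..M}. (case p of (a, b) \<Rightarrow> br (h a) (h b)) = 0"
    proof
      fix p assume "p \<in> {(i, j). i + j \<le> 2 * M} - {..M} \<times> {..M}"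
      then obtain a b where "p = (a, b)" "M < a \<or> M < b" by (cases p) auto
      then show "(case p of (a, b) \<Rightarrow> br (h a) (h b)) = 0" using assms by auto
    qed
  qed auto
  also have "\<dots> = (\<Sum>k\<le>2*M. \<Sum>a\<le>k. br (h a) (h (k - a)))"
    by (rule sum.triangle_reindex_eq)
  finally show ?thesis .
qed

context
  fixes s f
  assumes s: "s \<in> k_even" and f: "f \<in> k_odd"
begin

lemma gauge_term_odd: "gauge_term s f n \<in> gp odd"
  by (rule k_odd_odd[OF gauge_term_k_odd[OF s f]])

lemma br_gauge_term_odd: "br s (gauge_term s f n) \<in> gp odd"
  by (rule k_odd_odd[OF br_k_even_k_odd[OF s gauge_term_k_odd[OF s f]]])

lemma convolution_Suc_symmetric:
  "scale (of_nat (Suc n)) (\<Sum>a\<le>Suc n. br (gauge_term s f a) (gauge_term s f (Suc n - a)))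
   = scale 2 (\<Sum>a\<le>n. br (scale (of_nat (Suc a)) (gauge_term s f (Suc a))) (gauge_term s f (n - a)))"
proof -
  define m where "m = Suc n"
  define T where "T a = br (gauge_term s f a) (gauge_term s f (m - a))" for a
  have split: "scale (of_nat m) (T a) = scale (of_nat a) (T a) + scale (of_nat (m - a)) (T a)"
    if "a \<le> m" for a
    using that by (simp flip: scale_left_distrib of_nat_add)
  have "(\<Sum>a\<le>m. scale (of_nat (m - a)) (T a)) = (\<Sum>a\<le>m. scale (of_nat (m - (m - a))) (T (m - a)))"
    by (rule sum_atMost_rev[symmetric])
  also have "\<dots> = (\<Sum>a\<le>m. scale (of_nat a) (T a))"
    by (rule sum.cong) (simp_all add: T_def br_odd_sym[OF gauge_term_odd gauge_term_odd])
  finally have rev: "(\<Sum>a\<le>m. scale (of_nat (m - a)) (T a)) = (\<Sum>a\<le>m. scale (of_nat a) (T a))" .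
  have "scale (of_nat m) (\<Sum>a\<le>m. T a)
      = (\<Sum>a\<le>m. scale (of_nat a) (T a)) + (\<Sum>a\<le>m. scale (of_nat (m - a)) (T a))"
    by (simp add: scale_sum_right split sum.distrib)
  also have "\<dots> = scale 2 (\<Sum>a\<le>m. scale (of_nat a) (T a))"
    by (metis rev one_add_one scale_left_distrib scale_one)
  also have "(\<Sum>a\<le>m. scale (of_nat a) (T a)) = (\<Sum>a<m. scale (of_nat (Suc a)) (T (Suc a)))"
    by (subst sum.atMost_shift) simp
  also have "\<dots> = (\<Sum>a\<le>n. br (scale (of_nat (Suc a)) (gauge_term s f (Suc a))) (gauge_term s f (n - a)))"
    by (simp add: m_def T_def br_scale_left lessThan_Suc_atMost)
  finally show ?thesis by (simp add: m_def T_def)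
qed

lemma d_gauge_term_Suc:
  "scale (of_nat (Suc n)) (d (gauge_term s f (Suc n)))
   = br (d s) (gauge_term s f n) + br s (d (gauge_term s f n))"
proof -
  have "scale (of_nat (Suc n)) (d (gauge_term s f (Suc n)))
      = d (br s (gauge_term s f n) - (if n = 0 then d s else 0))"
    by (simp only: d_scale[symmetric] gauge_term_Suc)
  also have "\<dots> = br (d s) (gauge_term s f n) + br s (d (gauge_term s f n))"
    by (simp add: d_diff d_br_even[OF k_even_even[OF s]])
  finally show ?thesis .
qed

lemma convolution_gauge_term_Suc:
  "(\<Sum>a\<le>n. br (scale (of_nat (Suc a)) (gauge_term s f (Suc a))) (gauge_term s f (n - a)))
   = (\<Sum>a\<le>n. br (br s (gauge_term s f a)) (gauge_term s f (n - a))) - br (d s) (gauge_term s f n)"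
proof -
  have "(\<Sum>a\<le>n. br (scale (of_nat (Suc a)) (gauge_term s f (Suc a))) (gauge_term s f (n - a)))
      = (\<Sum>a\<le>n. br (br s (gauge_term s f a)) (gauge_term s f (n - a))
          - (if a = 0 then br (d s) (gauge_term s f n) else 0))"
    unfolding gauge_term_Suc br_diff_left by (rule sum.cong[OF refl]) simp
  then show ?thesis by (simp add: sum_subtractf)
qed

lemma curv_term_Suc: "scale (of_nat (Suc n)) (curv_term s f (Suc n)) = br s (curv_term s f n)"
proof -
  define Q where "Q = (\<Sum>a\<le>n. br (br s (gauge_term s f a)) (gauge_term s f (n - a)))"
  have "scale (of_nat (Suc n)) (curv_term s f (Suc n))
      = scale (of_nat (Suc n)) (d (gauge_term s f (Suc n)))
        + scale (1/2) (scale (of_nat (Suc n))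
            (\<Sum>a\<le>Suc n. br (gauge_term s f a) (gauge_term s f (Suc n - a))))"
    by (simp add: curv_term_def scale_right_distrib scale_left_commute[of "of_nat (Suc n)"])
  also have "\<dots> = br s (d (gauge_term s f n)) + Q"
    by (simp only: d_gauge_term_Suc convolution_Suc_symmetric convolution_gauge_term_Suc
        scale_scale Q_def) simp
  also have "\<dots> = br s (curv_term s f n)"
  proof -
    have "(\<Sum>a\<le>n. br (gauge_term s f a) (br s (gauge_term s f (n - a))))
        = (\<Sum>a\<le>n. br (br s (gauge_term s f (n - a))) (gauge_term s f (n - (n - a))))"
      by (rule sum.cong) (simp_all add: br_odd_sym[OF gauge_term_odd br_gauge_term_odd])
    also have "\<dots> = Q"
      unfolding Q_def by (rule sum_atMost_rev[where g="\<lambda>a. br (br s (gauge_term s f a)) (gauge_term s f (n - a))"])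
    finally have "(\<Sum>a\<le>n. br s (br (gauge_term s f a) (gauge_term s f (n - a)))) = Q + Q"
      by (simp add: jacobi_even[OF k_even_even[OF s]] sum.distrib Q_def)
    then show ?thesis
      by (simp add: curv_term_def br_add_right br_scale_right br_sum_right scale_half_double)
  qed
  finally show ?thesis .
qed

lemma curv_term_vanish:
  assumes "br s (curv f) = 0"
  shows "curv_term s f (Suc n) = 0"
proof (induction n)
  case 0
  have "curv_term s f 0 = curv f" by (simp add: curv_term_def curv_def)
  then show ?case using curv_term_Suc[of 0] assms by simp
next
  case (Suc n)
  then have "scale (of_nat (Suc (Suc n))) (curv_term s f (Suc (Suc n))) = 0"
    using curv_term_Suc[of "Suc n"] by simp
  then show ?case by (simp del: of_nat_Suc)
qed

lemma curv_gauge: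
  assumes "br s (curv f) = 0"
  shows "curv (gauge s f) = curv f"
proof -
  define M where "M = Suc N"
  have vanish: "gauge_term s f k = 0" if "M < k" for k
    using gauge_term_vanish[OF k_even_fil[OF s]] that by (simp add: M_def)
  have "curv (gauge s f) = curv (\<Sum>a\<le>M. gauge_term s f a)"
    by (simp add: gauge_eq_sum_terms[OF k_even_fil[OF s]] M_def)
  also have "\<dots> = (\<Sum>k\<le>2*M. curv_term s f k)"
  proof -
    have "(\<Sum>a\<le>M. d (gauge_term s f a)) = (\<Sum>k\<le>2*M. d (gauge_term s f k))"
      by (rule sum.mono_neutral_left) (auto simp: vanish)
    then show ?thesis
      by (simp only: curv_def curv_term_def d_sum br_sum_square[OF vanish] sum.distrib scale_sum_right)
  qed
  also have "\<dots> = curv_term s f 0"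
    by (subst sum.atMost_shift) (simp add: curv_term_vanish[OF assms])
  also have "\<dots> = curv f"
    by (simp add: curv_term_def curv_def)
  finally show ?thesis .
qed

end

section \<open>Perturbing the gauge parameter\<close>

definition ad_series :: "(nat \<Rightarrow> 'k) \<Rightarrow> 'v \<Rightarrow> 'v \<Rightarrow> 'v" where
  "ad_series c s x = (\<Sum>n<Suc N. scale (c n) ((br s ^^ n) x))"

lemma gauge_eq_ad_series:
  "gauge s f = ad_series (\<lambda>n. 1 / of_nat (fact n)) s f
     - ad_series (\<lambda>n. 1 / of_nat (fact (Suc n))) s (d s)"
  by (simp add: gauge_act_def ad_series_def)

lemma ad_power_add: "(br s ^^ n) (x + y) = (br s ^^ n) x + (br s ^^ n) y"
  by (induction n) (simp_all add: br_add_right)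

lemma ad_series_add: "ad_series c s (x + y) = ad_series c s x + ad_series c s y"
  by (simp add: ad_series_def ad_power_add scale_right_distrib sum.distrib)

lemma ad_power_perturb:
  assumes s: "s \<in> fil (-2)" and t: "t \<in> fil (- q)" and q: "2 \<le> q" and x: "x \<in> fil b"
  shows "(br (s + t) ^^ n) x - (br s ^^ n) x \<in> fil (b - q)"
proof (induction n)
  case 0
  then show ?case using subspace_0[OF subspace_gp] by simp
next
  case (Suc n)
  have st: "s + t \<in> fil (-2)"
    using subspace_add[OF subspace_gp s fil_mono[OF _ t]] q by simp
  have "br s ((br (s + t) ^^ n) x - (br s ^^ n) x) \<in> fil (b - q)"
    using br_fil[OF s Suc] by (rule fil_mono[rotated]) simp
  moreover have "br t ((br (s + t) ^^ n) x) \<in> fil (b - q)"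
    using br_fil[OF t ad_power_fil_mono[OF st x]] by (simp add: algebra_simps)
  moreover have "(br (s + t) ^^ Suc n) x - (br s ^^ Suc n) x
      = br s ((br (s + t) ^^ n) x - (br s ^^ n) x) + br t ((br (s + t) ^^ n) x)"
    by (simp add: br_add_left br_diff_right)
  ultimately show ?case by (simp add: subspace_add[OF subspace_gp])
qed

lemma ad_series_perturb:
  assumes "s \<in> fil (-2)" "t \<in> fil (- q)" "2 \<le> q" "x \<in> fil b"
  shows "ad_series c (s + t) x - ad_series c s x \<in> fil (b - q)"
proof -
  have "ad_series c (s + t) x - ad_series c s x
      = (\<Sum>n<Suc N. scale (c n) ((br (s + t) ^^ n) x - (br s ^^ n) x))"
    by (simp only: ad_series_def scale_right_diff_distrib sum_subtractf)
  also have "\<dots> \<in> fil (b - q)"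
    by (intro subspace_sum[OF subspace_gp] subspace_scale[OF subspace_gp] ad_power_perturb[OF assms])
  finally show ?thesis .
qed

lemma ad_series_leading:
  assumes "s \<in> fil (-2)" "x \<in> fil b"
  shows "ad_series c s x - scale (c 0) x \<in> fil (b - 2)"
proof -
  have "(br s ^^ Suc n) x \<in> fil (b - 2)" for n
    using ad_power_fil[OF assms, of "Suc n"] by (rule fil_mono[rotated]) simp
  then have "(\<Sum>n<N. scale (c (Suc n)) ((br s ^^ Suc n) x)) \<in> fil (b - 2)"
    by (intro subspace_sum[OF subspace_gp] subspace_scale[OF subspace_gp])
  moreover have "ad_series c s x - scale (c 0) x = (\<Sum>n<N. scale (c (Suc n)) ((br s ^^ Suc n) x))"
    by (simp only: ad_series_def sum.lessThan_Suc_shift) simp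
  ultimately show ?thesis by simp
qed

lemma gauge_perturb:
  assumes s: "s \<in> fil (-2)" and t: "t \<in> fil (- q)" and q: "2 \<le> q" and f: "f \<in> fil (-1)"
  shows "gauge (s + t) f - gauge s f + d t \<in> fil (- q - 1)"
proof -
  let ?E = "ad_series (\<lambda>n. 1 / of_nat (fact n))"
  let ?J = "ad_series (\<lambda>n. 1 / of_nat (fact (Suc n)))"
  have ds: "d s \<in> fil (-1)" using d_fil[OF s] by simp
  have dt: "d t \<in> fil (- q + 1)" using d_fil[OF t] by simp
  have st: "s + t \<in> fil (-2)"
    using subspace_add[OF subspace_gp s fil_mono[OF _ t]] q by simp
  have E: "?E (s + t) f - ?E s f \<in> fil (- q - 1)"
    by (rule fil_mono[OF _ ad_series_perturb[OF s t q f]]) simp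
  have J1: "?J (s + t) (d s) - ?J s (d s) \<in> fil (- q - 1)"
    by (rule fil_mono[OF _ ad_series_perturb[OF s t q ds]]) simp
  have J2: "?J (s + t) (d t) - scale (1 / of_nat (fact (Suc 0))) (d t) \<in> fil (- q - 1)"
    by (rule fil_mono[OF _ ad_series_leading[OF st dt]]) simp
  have "gauge (s + t) f - gauge s f + d t
      = (?E (s + t) f - ?E s f) - (?J (s + t) (d s) - ?J s (d s)) - (?J (s + t) (d t) - scale (1 / of_nat (fact (Suc 0))) (d t))"
    by (simp add: gauge_eq_ad_series d_add ad_series_add algebra_simps)
  then show ?thesis
    by (simp only:) (rule subspace_diff[OF subspace_gp subspace_diff[OF subspace_gp E J1] J2])
qed

end

section \<open>Maurer-Cartan elements modulo \<open>L\<close>\<close>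

locale maurer_cartan_mod_L = bounded_dgla scale K N br d
  for scale :: "'k::field_char_0 \<Rightarrow> 'v::ab_group_add \<Rightarrow> 'v" and K N br d +
  fixes L :: "'v set" and X :: 'v
  assumes subspace_L: "module.subspace scale L"
    and L_graded: "L = module.span scale (\<Union>i. L \<inter> K i)"
    and L_center: "L \<subseteq> center br"
    and d_L: "\<forall>l\<in>L. d l = 0"
    and L_quasi_iso: "quasi_iso_incl scale K d L"
    and X_center: "X \<in> center br"
    and X_even: "X \<in> graded_part scale K even"
    and d_X: "d X = 0"
begin

lemma br_L_left: "l \<in> L \<Longrightarrow> br l y = 0"
  using L_center by (auto simp: center_def)

lemma br_X_left: "br X y = 0"
  using X_center by (simp add: center_def)

lemma br_X_right: "br y X = 0"
  using br_even_antisym[OF X_even, of y] br_X_left by simp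

lemma L_subset_from_homogeneous:
  assumes "subspace T" "\<And>l i. l \<in> L \<Longrightarrow> l \<in> K i \<Longrightarrow> l \<in> T"
  shows "L \<subseteq> T"
proof -
  have "span (\<Union>i. L \<inter> K i) \<subseteq> T" by (rule span_minimal) (use assms in auto)
  then show ?thesis by (simp only: L_graded[symmetric])
qed

text \<open>\<open>center br\<close> only asks for \<open>br l y = 0\<close>; vanishing on the other side uses that
  \<open>L\<close> is spanned by homogeneous elements.\<close>

lemma br_L_right:
  assumes "l \<in> L"
  shows "br y l = 0"
proof -
  have "L \<subseteq> {l. \<forall>y. br y l = 0}"
  proof (rule L_subset_from_homogeneous)
    show "subspace {l. \<forall>y. br y l = 0}"
      by (rule subspaceI) (auto simp: br_add_right br_scale_right)
  next
    fix l i assume l: "l \<in> L" "l \<in> K i"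
    show "l \<in> {l. \<forall>y. br y l = 0}"
    proof (intro CollectI allI)
      fix y
      have "br y l = (\<Sum>j\<in>degs. br (hcomp j y) l)"
        by (simp only: br_sum_left[symmetric] sum_hcomp)
      also have "\<dots> = 0"
        by (simp add: br_antisym[OF hcomp_K l(2)] br_L_left[OF l(1)])
      finally show "br y l = 0" .
    qed
  qed
  then show ?thesis using assms by blast
qed

lemma hcomp_L:
  assumes "l \<in> L"
  shows "hcomp i l \<in> L"
proof -
  have "L \<subseteq> {v. \<forall>i. hcomp i v \<in> L}"
  proof (rule L_subset_from_homogeneous)
    show "subspace {v. \<forall>i. hcomp i v \<in> L}"
      by (rule subspaceI)
        (auto simp: hcomp_add hcomp_scale subspace_L subspace_add subspace_scale subspace_0)
  qed (auto simp: hcomp_K_eq subspace_0[OF subspace_L])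
  then show ?thesis using assms by blast
qed

lemma curv_add_L: "l \<in> L \<Longrightarrow> curv (x + l) = curv x"
  using d_L by (simp add: curv_add br_L_left br_L_right)

text \<open>Injectivity of \<open>H(L) \<rightarrow> H(k)\<close> forces the exact cocycle \<open>d D\<close> to vanish;
  surjectivity then splits \<open>D\<close>.\<close>

lemma decompose_mod_L:
  assumes D: "D \<in> K i" and dD: "d D \<in> L"
  obtains x y where "x \<in> L" "x \<in> K i" "y \<in> K (i - 1)" "D = x + d y"
proof -
  have "d D \<in> K (i + 1)" "d D \<in> d ` K (i + 1 - 1)"
    using d_K[OF D] D by simp_all
  then have "d D = 0"
    using L_quasi_iso dD unfolding quasi_iso_incl_def by blast
  then obtain x y where "x \<in> L" "x \<in> K i" "y \<in> K (i - 1)" "D - x = d y"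
    using L_quasi_iso D unfolding quasi_iso_incl_def by blast
  then show thesis using that by (simp add: algebra_simps)
qed

definition solutions :: "'v set" where
  "solutions = {f \<in> k_odd. curv f - X \<in> L}"

lemma br_curv_solution:
  assumes "f \<in> solutions"
  shows "br s (curv f) = 0"
proof -
  have "curv f - X \<in> L" using assms by (simp add: solutions_def)
  then have "br s (X + (curv f - X)) = 0"
    by (simp only: br_add_right br_X_right br_L_right) simp
  then show ?thesis by simp
qed

lemma curv_gauge_translate:
  assumes "f \<in> solutions" "s \<in> k_even" "l \<in> L"
  shows "curv (gauge s f + l) = curv f"
  using assms curv_gauge[OF assms(2) _ br_curv_solution[OF assms(1)]]
  by (simp add: curv_add_L solutions_def)

lemma gauge_translate_solution:
  assumes "f \<in> solutions" "s \<in> k_even" "l \<in> L \<inter> k_odd"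
  shows "gauge s f + l \<in> solutions"
  using assms curv_gauge_translate[OF assms(1,2)] gauge_k_odd[OF assms(2)]
    subspace_add[OF subspace_gp]
  by (simp add: solutions_def)

definition in_L_above :: "int \<Rightarrow> 'v \<Rightarrow> bool" where
  "in_L_above a v \<longleftrightarrow> (\<forall>j>a. hcomp j v \<in> L)"

lemma in_L_above_fil: "v \<in> fil a \<Longrightarrow> in_L_above a v"
  by (simp add: in_L_above_def gp_hcomp_zero subspace_0[OF subspace_L])

lemma in_L_above_add: "in_L_above a v \<Longrightarrow> in_L_above a w \<Longrightarrow> in_L_above a (v + w)"
  by (simp add: in_L_above_def hcomp_add subspace_add[OF subspace_L])

lemma in_L_above_lower:
  assumes "in_L_above a v" "hcomp a v \<in> L"
  shows "in_L_above (a - 1) v"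
  unfolding in_L_above_def
proof (intro allI impI)
  fix j assume "a - 1 < j"
  then show "hcomp j v \<in> L"
    using assms by (cases "j = a") (auto simp: in_L_above_def)
qed

lemma in_L_above_bottom:
  assumes "in_L_above a v" "a < - int N"
  shows "v \<in> L"
proof -
  have "hcomp i v \<in> L" for i
    using assms by (cases "a < i") (auto simp: in_L_above_def hcomp_outside subspace_0[OF subspace_L])
  then have "(\<Sum>i\<in>degs. hcomp i v) \<in> L"
    by (intro subspace_sum[OF subspace_L])
  then show ?thesis by (simp only: sum_hcomp)
qed

lemma br_in_L_above_fil:
  assumes v: "in_L_above a v" and y: "y \<in> fil (-1)"
  shows "br v y \<in> fil (a - 1)"
proof -
  have "br (hcomp i v) y \<in> fil (a - 1)" for i
  proof (cases "a < i")
    case True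
    then show ?thesis
      using v br_L_left subspace_0[OF subspace_gp] by (simp add: in_L_above_def)
  next
    case False
    then have "hcomp i v \<in> fil a" by (intro K_fil[OF hcomp_K]) simp
    from br_fil[OF this y] show ?thesis by simp
  qed
  then have "(\<Sum>i\<in>degs. br (hcomp i v) y) \<in> fil (a - 1)"
    by (intro subspace_sum[OF subspace_gp])
  then show ?thesis by (simp only: br_sum_left[symmetric] sum_hcomp)
qed

text \<open>By the Bianchi identity \<open>d (curv f) = [curv f, f]\<close>, the highest component of
  \<open>curv f - X\<close> that is not known to lie in \<open>L\<close> is closed.\<close>

lemma d_hcomp_obstruction:
  assumes f: "f \<in> k_odd" and above: "in_L_above a (curv f - X)"
  shows "d (hcomp a (curv f - X)) = 0"
proof -
  have "d (curv f - X) = br (curv f - X) f"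
    using bianchi_identity[OF k_odd_odd[OF f]] by (simp add: d_diff d_X br_diff_left br_X_left)
  moreover have "br (curv f - X) f \<in> fil (a - 1)"
    by (rule br_in_L_above_fil[OF above k_odd_fil[OF f]])
  ultimately have "hcomp (a + 1) (d (curv f - X)) = 0"
    by (simp add: gp_hcomp_zero)
  then show ?thesis by (simp add: hcomp_d)
qed

lemma solution_refine_step:
  assumes f: "f \<in> k_odd" and a: "a \<le> 0" "even a" and above: "in_L_above a (curv f - X)"
  shows "\<exists>f'\<in>k_odd. in_L_above (a - 2) (curv f' - X)"
proof -
  define P where "P = curv f - X"
  have "d (hcomp a P) \<in> L"
    using d_hcomp_obstruction[OF f above] subspace_0[OF subspace_L] by (simp add: P_def)
  then obtain x y where x: "x \<in> L" "x \<in> K a" and y: "y \<in> K (a - 1)" and Pa: "hcomp a P = x + d y"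
    using decompose_mod_L[OF hcomp_K] by blast
  have dy: "d y \<in> K a" using d_K[OF y] by simp
  have y_odd: "y \<in> k_odd" by (rule K_gp[OF _ y]) (use a in simp)
  have "- y \<in> fil (a - 1)"
    by (rule K_fil[OF subspace_neg[OF subspace_K y]]) simp
  define B where "B = curv (f + - y) - curv f - d (- y)"
  have B: "B \<in> fil (a - 2)"
    unfolding B_def by (rule fil_mono[OF _ curv_add_fil[OF k_odd_fil[OF f] \<open>- y \<in> fil (a - 1)\<close>]])
      (use a in simp_all)
  have P_even: "P \<in> gp even"
    unfolding P_def by (rule subspace_diff[OF subspace_gp curv_even[OF f] X_even])
  have eq: "curv (f - y) - X = P + (B - d y)"
    by (simp add: P_def B_def d_neg)
  have "B - d y \<in> fil a"
    using fil_mono[OF _ B] K_fil[OF dy] subspace_diff[OF subspace_gp] by simp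
  then have "in_L_above a (curv (f - y) - X)"
    unfolding eq using in_L_above_add[OF above[folded P_def] in_L_above_fil] by blast
  moreover have "hcomp a (curv (f - y) - X) = x"
    using gp_hcomp_zero[OF B, of a] by (simp add: eq hcomp_add hcomp_diff Pa hcomp_K_eq[OF dy])
  moreover have "hcomp (a - 1) (curv (f - y) - X) = 0"
    using gp_hcomp_zero[OF B, of "a - 1"] gp_hcomp_zero[OF P_even, of "a - 1"] a
    by (simp add: eq hcomp_add hcomp_diff hcomp_K_eq[OF dy])
  ultimately have "in_L_above (a - 1 - 1) (curv (f - y) - X)"
    using x(1) subspace_0[OF subspace_L] by (intro in_L_above_lower) simp_all
  moreover have "f - y \<in> k_odd"
    by (rule subspace_diff[OF subspace_gp f y_odd])
  ultimately show ?thesis by (auto simp: algebra_simps)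
qed

lemma solutions_nonempty: "solutions \<noteq> {}"
proof -
  have "\<exists>f\<in>k_odd. in_L_above (- 2 * int (Suc N)) (curv f - X)"
    by (rule descending_even_induction[of 0])
      (auto intro: subspace_0[OF subspace_gp] in_L_above_fil[OF fil_top] solution_refine_step)
  then obtain f where "f \<in> k_odd" "in_L_above (- 2 * int (Suc N)) (curv f - X)"
    by blast
  then have "f \<in> solutions"
    using in_L_above_bottom by (simp add: solutions_def)
  then show ?thesis by blast
qed

lemma d_hcomp_solution_diff:
  assumes g: "g \<in> solutions" and h: "h \<in> solutions" and gh: "g - h \<in> fil (a - 1)" and a: "a \<le> 0"
  shows "d (hcomp (a - 1) (g - h)) \<in> L"
proof -
  have "(curv g - X) - (curv h - X) \<in> L"
    by (rule subspace_diff[OF subspace_L]) (use g h in \<open>simp_all add: solutions_def\<close>)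
  then have top: "hcomp a (curv g - curv h) \<in> L"
    by (simp add: hcomp_L)
  have h_odd: "h \<in> k_odd" using h by (simp add: solutions_def)
  have "curv (h + (g - h)) - curv h - d (g - h) \<in> fil (a - 2)"
    by (rule fil_mono[OF _ curv_add_fil[OF k_odd_fil[OF h_odd] gh]]) (use a in simp_all)
  then have "curv g - curv h - d (g - h) \<in> fil (a - 2)" by simp
  then have "hcomp a (curv g - curv h - d (g - h)) = 0"
    by (rule gp_hcomp_zero) simp
  moreover have "hcomp a (curv g - curv h)
      = hcomp a (curv g - curv h - d (g - h)) + hcomp (a - 1 + 1) (d (g - h))"
    by (simp flip: hcomp_add)
  ultimately have "hcomp a (curv g - curv h) = hcomp (a - 1 + 1) (d (g - h))"
    by simp
  with top show ?thesis by (simp only: hcomp_d)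
qed

lemma gauge_refine_step:
  assumes f: "f \<in> solutions" and g: "g \<in> solutions" and s: "s \<in> k_even" and l: "l \<in> L \<inter> k_odd"
    and a: "a \<le> 0" "even a" and close: "g - (gauge s f + l) \<in> fil a"
  shows "\<exists>s'\<in>k_even. \<exists>l'\<in>L \<inter> k_odd. g - (gauge s' f + l') \<in> fil (a - 2)"
proof -
  define h where "h = gauge s f + l"
  have h: "h \<in> solutions" unfolding h_def by (rule gauge_translate_solution[OF f s l])
  have "g - h \<in> k_odd"
    using g h subspace_diff[OF subspace_gp] by (simp add: solutions_def)
  then have "hcomp a (g - h) = 0" using a by (simp add: gp_hcomp_zero)
  then have gh: "g - h \<in> fil (a - 1)"
    using fil_diff_hcomp[of "g - h" a] close by (simp add: h_def)
  obtain x y where x: "x \<in> L" "x \<in> K (a - 1)" and y: "y \<in> K (a - 1 - 1)"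
    and D: "hcomp (a - 1) (g - h) = x + d y"
    using decompose_mod_L[OF hcomp_K d_hcomp_solution_diff[OF g h gh a(1)]] by blast
  have neg_y: "- y \<in> fil (- (2 - a))"
    by (rule K_fil[OF subspace_neg[OF subspace_K y]]) simp
  have f_odd: "f \<in> k_odd" using f by (simp add: solutions_def)
  have perturb: "gauge (s + - y) f - gauge s f + d (- y) \<in> fil (a - 2)"
    by (rule fil_mono[OF _ gauge_perturb[OF k_even_fil[OF s] neg_y _ k_odd_fil[OF f_odd]]])
      (use a in simp_all)
  have lower: "g - h - hcomp (a - 1) (g - h) \<in> fil (a - 2)"
    using fil_diff_hcomp[OF gh] by simp
  have "g - (gauge (s + - y) f + (l + x))
      = (g - h - (x + d y)) - (gauge (s + - y) f - gauge s f + d (- y))"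
    by (simp add: h_def d_neg algebra_simps)
  then have "g - (gauge (s + - y) f + (l + x))
      = (g - h - hcomp (a - 1) (g - h)) - (gauge (s + - y) f - gauge s f + d (- y))"
    by (simp only: D)
  then have "g - (gauge (s + - y) f + (l + x)) \<in> fil (a - 2)"
    by (simp only:) (rule subspace_diff[OF subspace_gp lower perturb])
  moreover have "s + - y \<in> k_even"
    using y a by (intro subspace_add[OF subspace_gp s] K_gp[OF _ subspace_neg[OF subspace_K y]]) auto
  moreover have "x \<in> k_odd"
    by (rule K_gp[OF _ x(2)]) (use a in simp)
  then have "l + x \<in> L \<inter> k_odd"
    using l x(1) subspace_add[OF subspace_L] subspace_add[OF subspace_gp] by blast
  ultimately show ?thesis by blast
qed

lemma gauge_transitive:
  assumes f: "f \<in> solutions" and g: "g \<in> solutions"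
  shows "\<exists>s\<in>k_even. \<exists>l\<in>L \<inter> k_odd. g = gauge s f + l"
proof -
  have "\<exists>p\<in>k_even \<times> (L \<inter> k_odd). g - (gauge (fst p) f + snd p) \<in> fil (- 2 * int (Suc N))"
  proof (rule descending_even_induction[of "(0, 0)"])
    show "(0, 0) \<in> k_even \<times> (L \<inter> k_odd)"
      by (simp add: subspace_0[OF subspace_gp] subspace_0[OF subspace_L])
  next
    fix p a
    assume "p \<in> k_even \<times> (L \<inter> k_odd)" "a \<le> 0" "even a" "g - (gauge (fst p) f + snd p) \<in> fil a"
    then show "\<exists>q\<in>k_even \<times> (L \<inter> k_odd). g - (gauge (fst q) f + snd q) \<in> fil (a - 2)"
      using gauge_refine_step[OF f g] by (cases p) fastforce
  qed (simp add: fil_top)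
  then obtain s l where "s \<in> k_even" "l \<in> L \<inter> k_odd"
    and "g - (gauge s f + l) \<in> fil (- 2 * int (Suc N))"
    by auto
  moreover from this(3) have "g - (gauge s f + l) = 0"
    by (rule fil_bottom) simp
  ultimately show ?thesis by auto
qed

end

theorem theorem3p8:
  fixes scale :: "'k::field_char_0 \<Rightarrow> 'v::ab_group_add \<Rightarrow> 'v"
    and K :: "int \<Rightarrow> 'v set" and N :: nat
    and br :: "'v \<Rightarrow> 'v \<Rightarrow> 'v" and d :: "'v \<Rightarrow> 'v"
    and L :: "'v set" and X :: "'v"
  assumes dg: "dgla scale K N br d"
    and L_sub: "module.subspace scale L"
    and L_graded: "L = module.span scale (\<Union>i. L \<inter> K i)"
    and L_center: "L \<subseteq> center br"
    and L_closed: "\<forall>x\<in>L. d x = 0"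
    and L_qis: "quasi_iso_incl scale K d L"
    and X_center: "X \<in> center br"
    and X_even: "X \<in> graded_part scale K even"
    and X_closed: "d X = 0"
  defines "kodd \<equiv> graded_part scale K (\<lambda>i. i < 0 \<and> odd i)"
    and "keven \<equiv> graded_part scale K (\<lambda>i. i < 0 \<and> even i)"
    and "lodd \<equiv> L \<inter> graded_part scale K (\<lambda>i. i < 0 \<and> odd i)"
    and "S \<equiv> {f \<in> graded_part scale K (\<lambda>i. i < 0 \<and> odd i).
               d f + scale (1/2) (br f f) - X \<in> L}"
  shows "(S \<noteq> {}
          \<and> (\<forall>s\<in>keven. \<forall>l\<in>lodd. \<forall>f\<in>S. gauge_act scale br d (Suc N) s f + l \<in> S)
          \<and> (\<forall>f\<in>S. \<forall>g\<in>S. \<exists>s\<in>keven. \<exists>l\<in>lodd. g = gauge_act scale br d (Suc N) s f + l))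
         \<and> (\<forall>f\<in>S. \<forall>g\<in>S. d f + scale (1/2) (br f f) - X = d g + scale (1/2) (br g g) - X)"
proof -
  interpret maurer_cartan_mod_L scale K N br d L X
    by (intro maurer_cartan_mod_L.intro maurer_cartan_mod_L_axioms.intro dgla_imp_bounded_dgla dg L_sub L_graded
        L_center L_closed L_qis X_center X_even X_closed)
  have S: "S = solutions" and curv: "\<And>f. d f + scale (1/2) (br f f) = curv f"
    by (simp_all add: S_def solutions_def curv_def)
  show ?thesis
    unfolding S curv keven_def lodd_def
  proof (intro conjI ballI)
    show "solutions \<noteq> {}" by (rule solutions_nonempty)
  next
    fix s l f assume "s \<in> k_even" "l \<in> L \<inter> k_odd" "f \<in> solutions"
    then show "gauge s f + l \<in> solutions" by (simp add: gauge_translate_solution)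
  next
    fix f g assume "f \<in> solutions" "g \<in> solutions"
    then show "\<exists>s\<in>k_even. \<exists>l\<in>L \<inter> k_odd. g = gauge s f + l" by (rule gauge_transitive)
  next
    fix f g assume f: "f \<in> solutions" and "g \<in> solutions"
    then obtain s l where "s \<in> k_even" "l \<in> L \<inter> k_odd" "g = gauge s f + l"
      using gauge_transitive by blast
    then show "curv f - X = curv g - X" using curv_gauge_translate[OF f] by simp
  qed
qed

end
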